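(* Let $N\ge1$, $f:\mathbb{N}^N\to\mathbb{N}$, $p$ a prime, $n$ a nonnegative integer, and let $\boldsymbol{\ell}\in\mathbb{N}^N$ be such that $\boldsymbol{\ell}\neq p\mathbf{m}$ for every $\mathbf{m}\in\mathbb{N}^N$. Define $g:\mathbb{N}^N\to\mathbb{N}$ by $g(\mathbf{x})=\binom{p}{p\mathbf{x}}_f$. Then $$\binom{np}{\boldsymbol{\ell}}_f\equiv n\cdot\sum_{\mathbf{k}}\binom{p}{\mathbf{k}}_f\binom{n-1}{\mathbf{x}_{\mathbf{k}}}_g\pmod{p^2},$$ where the sum runs over all $\mathbf{k}\in S(\boldsymbol{\ell})$ such that not every entry of $\mathbf{k}$ is divisible by $p$ and $\boldsymbol{\ell}-\mathbf{k}=p\mathbf{x}_{\mathbf{k}}$ for some $\mathbf{x}_{\mathbf{k}}\in\mathbb{N}^N$.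
   Context: $\mathbb{N}=\{0,1,2,\dots\}$. $S(\boldsymbol{\ell})=\{\mathbf{s}\in\mathbb{N}^N:\mathbf{s}\neq\mathbf{0},\ 0\le s_j\le\ell_j\ \forall j\}$. For $h:\mathbb{N}^N\to\mathbb{N}$, $k\ge0$ and $\mathbf{x}\in\mathbb{N}^N$, $\binom{k}{\mathbf{x}}_h=\sum_{\mathbf{m}_1+\cdots+\mathbf{m}_k=\mathbf{x}} h(\mathbf{m}_1)\cdots h(\mathbf{m}_k)$ over tuples of vectors in $\mathbb{N}^N$. *)

theory Defs
  imports "HOL-Analysis.Finite_Cartesian_Product" "HOL-Number_Theory.Cong"
begin

text \<open>Vectors in N^N are modelled as nat ^ 'n for a finite index type 'n (so N = CARD('n) >= 1).\<close>

definition vscale :: "nat \<Rightarrow> nat ^ 'n \<Rightarrow> nat ^ 'n" where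
  "vscale c x = (\<chi> j. c * x $ j)"

definition gbinom :: "(nat ^ 'n \<Rightarrow> nat) \<Rightarrow> nat \<Rightarrow> nat ^ 'n \<Rightarrow> nat" where
  "gbinom h k x = (\<Sum>ms \<in> {ms. length ms = k \<and> sum_list ms = x}. prod_list (map h ms))"

definition Sset :: "nat ^ 'n \<Rightarrow> (nat ^ 'n) set" where
  "Sset l = {s. s \<noteq> 0 \<and> (\<forall>j. s $ j \<le> l $ j)}"

end

theory Submission
  imports Defs
begin

text \<open>
Write \<open>h = gbinom f p\<close>, so that \<open>g x = h (vscale p x)\<close>. As \<open>gbinom f k\<close> is the
\<open>k\<close>-th convolution power of \<open>f\<close>, \<open>gbinom f (n * p)\<close> is the \<open>n\<close>-th convolution power
of \<open>h\<close>. Split \<open>h = a + b\<close> with \<open>a\<close> the restriction of \<open>h\<close> to multiples of \<open>p\<close>.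
Cyclic rotation acts freely on the \<open>p\<close>-tuples summing to a non-multiple of \<open>p\<close> and
preserves their weight, so \<open>p\<close> divides every value of \<open>b\<close>. Hence, modulo \<open>p^2\<close>, the
\<open>n\<close>-th power of \<open>a + b\<close> is \<open>a^n + n (b * a^(n-1))\<close> (powers and products taken for
convolution). The first term vanishes at the non-multiple \<open>l\<close>, and \<open>a^(n-1)\<close> at
\<open>p x\<close> equals \<open>g^(n-1)\<close> at \<open>x\<close>.
\<close>

lemma finite_atMost_vec_nat: "finite {..x :: nat ^ 'n}"
proof (rule finite_subset)
  show "{..x} \<subseteq> vec_lambda ` PiE UNIV (\<lambda>j. {..x $ j})"
  proof
    fix y assume "y \<in> {..x}"
    then have "(\<lambda>j. y $ j) \<in> PiE UNIV (\<lambda>j. {..x $ j})"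
      by (auto simp: less_eq_vec_def)
    then show "y \<in> vec_lambda ` PiE UNIV (\<lambda>j. {..x $ j})"
      by (metis (no_types) image_eqI vec_lambda_eta)
  qed
  show "finite (vec_lambda ` PiE UNIV (\<lambda>j. {..x $ j}))"
    by (intro finite_imageI finite_PiE) auto
qed

lemma sum_list_ge_member: "m \<in> set ms \<Longrightarrow> m \<le> sum_list (ms :: (nat ^ 'n) list)"
  by (induction ms) (auto simp: less_eq_vec_def add_increasing2 add_increasing)

lemma finite_vec_compositions: "finite {ms. length ms = k \<and> sum_list ms = (x :: nat ^ 'n)}"
proof (rule finite_subset)
  show "{ms. length ms = k \<and> sum_list ms = x} \<subseteq> {ms. set ms \<subseteq> {..x} \<and> length ms = k}"
    by (auto dest: sum_list_ge_member)
  show "finite {ms. set ms \<subseteq> {..x} \<and> length ms = k}"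
    by (rule finite_lists_length_eq[OF finite_atMost_vec_nat])
qed

lemma diff_diff_vec_nat: "y \<le> x \<Longrightarrow> x - (x - y) = (y :: nat ^ 'n)"
  by (auto simp: less_eq_vec_def vec_eq_iff)

lemma add_diff_cancel_left_vec_nat: "(y + z) - y = (z :: nat ^ 'n)"
  by (simp add: vec_eq_iff)

lemma diff_diff_diff_vec_nat: "y \<le> t \<Longrightarrow> t \<le> x \<Longrightarrow> x - y - (t - y) = (x - t :: nat ^ 'n)"
  by (auto simp: less_eq_vec_def vec_eq_iff)

definition vconv :: "(nat ^ 'n \<Rightarrow> nat) \<Rightarrow> (nat ^ 'n \<Rightarrow> nat) \<Rightarrow> nat ^ 'n \<Rightarrow> nat" where
  "vconv u v x = (\<Sum>y\<le>x. u y * v (x - y))"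

lemma vconv_commute: "vconv u v = vconv v u"
proof
  fix x
  show "vconv u v x = vconv v u x"
    unfolding vconv_def
    by (rule sum.reindex_bij_witness[where i="\<lambda>y. x - y" and j="\<lambda>y. x - y"])
       (auto simp: diff_diff_vec_nat, auto simp: less_eq_vec_def mult.commute)
qed

lemma sum_atMost_vec_nat_swap:
  "(\<Sum>y\<le>x. \<Sum>z\<le>x - y. F y z) = (\<Sum>w\<le>x. \<Sum>y\<le>w. F y (w - y))" for x :: "nat ^ 'n"
proof -
  have "(\<Sum>y\<le>x. \<Sum>z\<le>x - y. F y z) = (\<Sum>(y, z)\<in>Sigma {..x} (\<lambda>y. {..x - y}). F y z)"
    by (rule sum.Sigma) (auto simp: finite_atMost_vec_nat)
  also have "\<dots> = (\<Sum>(w, y)\<in>Sigma {..x} atMost. F y (w - y))"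
    by (rule sum.reindex_bij_witness[where i="\<lambda>(w, y). (y, w - y)" and j="\<lambda>(y, z). (y + z, y)"])
       (auto simp: less_eq_vec_def vec_eq_iff le_diff_conv2 add.commute,
        (meson order_trans diff_le_mono)+)
  also have "\<dots> = (\<Sum>w\<le>x. \<Sum>y\<le>w. F y (w - y))"
    by (rule sum.Sigma[symmetric]) (auto simp: finite_atMost_vec_nat)
  finally show ?thesis .
qed

lemma vconv_assoc: "vconv u (vconv v w) = vconv (vconv u v) w"
proof
  fix x
  have "vconv u (vconv v w) x = (\<Sum>y\<le>x. \<Sum>z\<le>x - y. u y * v z * w (x - y - z))"
    by (simp add: vconv_def sum_distrib_left mult.assoc)
  also have "\<dots> = (\<Sum>t\<le>x. \<Sum>y\<le>t. u y * v (t - y) * w (x - y - (t - y)))"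
    by (rule sum_atMost_vec_nat_swap)
  also have "\<dots> = (\<Sum>t\<le>x. \<Sum>y\<le>t. u y * v (t - y) * w (x - t))"
    by (intro sum.cong refl) (simp add: diff_diff_diff_vec_nat)
  also have "\<dots> = vconv (vconv u v) w x"
    by (simp add: vconv_def sum_distrib_right)
  finally show "vconv u (vconv v w) x = vconv (vconv u v) w x" .
qed

lemma vconv_left_commute: "vconv u (vconv v w) = vconv v (vconv u w)"
  by (metis vconv_assoc vconv_commute)

lemma dvd_vconv_left: "(\<And>y. d dvd u y) \<Longrightarrow> d dvd vconv u w x"
  by (simp add: vconv_def dvd_sum)

lemma gbinom_0: "gbinom h 0 x = (if x = 0 then 1 else 0)"
proof -
  have "{ms. length ms = 0 \<and> sum_list ms = x} = (if x = 0 then {[]} else {})"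
    by auto
  then show ?thesis by (simp add: gbinom_def)
qed

lemma gbinom_Suc: "gbinom h (Suc k) = vconv h (gbinom h k)" for h :: "nat ^ 'n \<Rightarrow> nat"
proof
  fix x :: "nat ^ 'n"
  let ?L = "\<lambda>k x. {ms. length ms = k \<and> sum_list ms = x}"
  have split: "?L (Suc k) x = (\<Union>y\<le>x. Cons y ` ?L k (x - y))"
  proof (rule set_eqI, rule iffI)
    fix ms assume "ms \<in> ?L (Suc k) x"
    then obtain y ms' where ms: "ms = y # ms'" "length ms' = k" "y + sum_list ms' = x"
      by (cases ms) auto
    have "sum_list ms' = x - y"
      using ms(3) add_diff_cancel_left_vec_nat by metis
    moreover have "y \<le> x"
      unfolding ms(3)[symmetric] less_eq_vec_def by simp
    ultimately show "ms \<in> (\<Union>y\<le>x. Cons y ` ?L k (x - y))"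
      using ms by blast
  next
    fix ms assume "ms \<in> (\<Union>y\<le>x. Cons y ` ?L k (x - y))"
    then show "ms \<in> ?L (Suc k) x"
      by (auto simp: less_eq_vec_def vec_eq_iff)
  qed
  have "gbinom h (Suc k) x = (\<Sum>y\<le>x. \<Sum>ms\<in>Cons y ` ?L k (x - y). prod_list (map h ms))"
    unfolding gbinom_def split
    by (rule sum.UNION_disjoint) (auto simp: finite_atMost_vec_nat finite_vec_compositions)
  also have "\<dots> = (\<Sum>y\<le>x. h y * gbinom h k (x - y))"
    by (intro sum.cong refl, subst sum.reindex) (auto simp: gbinom_def sum_distrib_left)
  finally show "gbinom h (Suc k) x = vconv h (gbinom h k) x"
    by (simp add: vconv_def)
qed

lemma gbinom_add: "gbinom h (a + b) = vconv (gbinom h a) (gbinom h b)"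
proof (induction a)
  case 0
  have "vconv (gbinom h 0) (gbinom h b) x = gbinom h b x" for x
  proof -
    have "vconv (gbinom h 0) (gbinom h b) x = (\<Sum>y\<le>x. if y = 0 then gbinom h b (x - y) else 0)"
      by (auto simp: vconv_def gbinom_0 intro!: sum.cong)
    also have "\<dots> = gbinom h b x"
      by (simp add: finite_atMost_vec_nat less_eq_vec_def)
    finally show ?thesis .
  qed
  then show ?case by auto
next
  case (Suc a)
  then show ?case by (simp add: gbinom_Suc vconv_assoc)
qed

lemma gbinom_mult: "gbinom h (n * p) = gbinom (gbinom h p) n"
  by (induction n) (simp_all add: gbinom_0 gbinom_Suc gbinom_add)

lemma funpow_closed: "(\<And>x. x \<in> A \<Longrightarrow> r x \<in> A) \<Longrightarrow> x \<in> A \<Longrightarrow> (r ^^ i) x \<in> A"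
  by (induction i) auto

lemma funpow_invariant:
  "(\<And>x. x \<in> A \<Longrightarrow> r x \<in> A) \<Longrightarrow> (\<And>x. x \<in> A \<Longrightarrow> w (r x) = w x) \<Longrightarrow> x \<in> A
    \<Longrightarrow> w ((r ^^ i) x) = w x"
  by (induction i) (auto simp: funpow_closed)

lemma funpow_mult_period: "(r ^^ p) x = x \<Longrightarrow> (r ^^ (p * k)) x = x"
  by (induction k) (simp_all add: funpow_add)

lemma funpow_mod_period:
  assumes "(r ^^ p) x = x"
  shows "(r ^^ i) x = (r ^^ (i mod p)) x"
proof -
  have "(r ^^ i) x = (r ^^ (i mod p + p * (i div p))) x"
    by simp
  also have "\<dots> = (r ^^ (i mod p)) ((r ^^ (p * (i div p))) x)"
    by (simp only: funpow_add comp_apply)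
  also have "\<dots> = (r ^^ (i mod p)) x"
    by (simp add: funpow_mult_period[OF assms])
  finally show ?thesis .
qed

lemma funpow_prime_period_fixpoint:
  assumes "prime p" "(r ^^ p) x = x" "(r ^^ d) x = x" "\<not> p dvd d"
  shows "r x = x"
proof -
  have "coprime d p"
    using assms(1,4) prime_imp_coprime coprime_commute by blast
  then obtain e where e: "[d * e = 1] (mod p)"
    using cong_solve_coprime_nat by auto
  have "x = (r ^^ (d * e)) x"
    using funpow_mult_period[OF assms(3)] by simp
  also have "\<dots> = (r ^^ (d * e mod p)) x"
    by (rule funpow_mod_period[OF assms(2)])
  also have "d * e mod p = 1"
    using e prime_gt_1_nat[OF assms(1)] by (simp add: cong_def)
  finally show ?thesis by simp
qed

lemma range_funpow_eq:
  assumes "0 < p" "(r ^^ p) x = x" "y \<in> range (\<lambda>i. (r ^^ i) x)"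
  shows "range (\<lambda>i. (r ^^ i) y) = range (\<lambda>i. (r ^^ i) x)"
proof -
  obtain i where y: "y = (r ^^ i) x" using assms(3) by blast
  have "(r ^^ j) y = (r ^^ (j + i)) x" for j
    by (simp add: y funpow_add)
  moreover have "(r ^^ j) x = (r ^^ (j + (p * i - i))) y" for j
  proof -
    have "(r ^^ j) x = (r ^^ j) ((r ^^ (p * i)) x)"
      by (simp add: funpow_mult_period[OF assms(2)])
    also have "p * i = (p * i - i) + i"
      using assms(1) by simp
    finally show ?thesis by (simp add: y funpow_add)
  qed
  ultimately show ?thesis by blast
qed

lemma sum_range_funpow:
  fixes w :: "'a \<Rightarrow> nat"
  assumes "prime p" "x \<in> A"
    and closed: "\<And>x. x \<in> A \<Longrightarrow> r x \<in> A"
    and period: "\<And>x. x \<in> A \<Longrightarrow> (r ^^ p) x = x"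
    and free: "\<And>x. x \<in> A \<Longrightarrow> r x \<noteq> x"
    and invariant: "\<And>x. x \<in> A \<Longrightarrow> w (r x) = w x"
  shows "sum w (range (\<lambda>i. (r ^^ i) x)) = p * w x"
proof -
  have p0: "0 < p"
    using \<open>prime p\<close> by (rule prime_gt_0_nat)
  have "(r ^^ i) x \<in> (\<lambda>i. (r ^^ i) x) ` {..<p}" for i
  proof (rule rev_image_eqI)
    show "i mod p \<in> {..<p}"
      using p0 by simp
    show "(r ^^ i) x = (r ^^ (i mod p)) x"
      using period[OF \<open>x \<in> A\<close>] by (rule funpow_mod_period)
  qed
  then have range_eq: "range (\<lambda>i. (r ^^ i) x) = (\<lambda>i. (r ^^ i) x) ` {..<p}"
    by auto
  have "inj_on (\<lambda>i. (r ^^ i) x) {..<p}"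
  proof (rule linorder_inj_onI', rule notI)
    fix i j assume ij: "i \<in> {..<p}" "j \<in> {..<p}" "i < j" "(r ^^ i) x = (r ^^ j) x"
    define z where "z = (r ^^ i) x"
    have z: "z \<in> A"
      unfolding z_def using closed \<open>x \<in> A\<close> by (rule funpow_closed)
    have "(r ^^ (j - i)) z = (r ^^ (j - i + i)) x"
      by (simp add: z_def funpow_add)
    also have "\<dots> = z"
      using ij by (simp add: z_def)
    finally have "(r ^^ (j - i)) z = z" .
    moreover have "\<not> p dvd j - i"
      using ij by (auto dest: dvd_imp_le)
    ultimately have "r z = z"
      using funpow_prime_period_fixpoint[OF \<open>prime p\<close> period[OF z]] by blast
    with free[OF z] show False by contradiction
  qed
  then have "sum w (range (\<lambda>i. (r ^^ i) x)) = (\<Sum>i<p. w ((r ^^ i) x))"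
    by (simp add: range_eq sum.reindex)
  also have "\<dots> = p * w x"
    using funpow_invariant[of A r w, OF closed invariant \<open>x \<in> A\<close>] by simp
  finally show ?thesis .
qed

lemma prime_dvd_sum_free_action:
  fixes w :: "'a \<Rightarrow> nat"
  assumes "prime p" "finite A"
    and closed: "\<And>x. x \<in> A \<Longrightarrow> r x \<in> A"
    and period: "\<And>x. x \<in> A \<Longrightarrow> (r ^^ p) x = x"
    and free: "\<And>x. x \<in> A \<Longrightarrow> r x \<noteq> x"
    and invariant: "\<And>x. x \<in> A \<Longrightarrow> w (r x) = w x"
  shows "p dvd sum w A"
proof -
  define orbit where "orbit x = range (\<lambda>i. (r ^^ i) x)" for x
  have orbit_sub: "orbit x \<subseteq> A" if "x \<in> A" for x
    using funpow_closed[of A r, OF closed that] by (auto simp: orbit_def)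
  have "x \<in> orbit x" for x
    unfolding orbit_def by (metis funpow_0 rangeI)
  then have cover: "A = \<Union>(orbit ` A)"
    using orbit_sub by blast
  have "S \<inter> T = {}" if ST: "S \<in> orbit ` A" "T \<in> orbit ` A" and "S \<noteq> T" for S T
  proof (rule ccontr)
    obtain x y where "x \<in> A" "y \<in> A" "S = orbit x" "T = orbit y"
      using ST by blast
    moreover assume "S \<inter> T \<noteq> {}"
    then obtain z where "z \<in> orbit x" "z \<in> orbit y"
      using calculation by blast
    ultimately have "S = orbit z" "T = orbit z"
      using range_funpow_eq[OF prime_gt_0_nat[OF \<open>prime p\<close>] period] unfolding orbit_def by metis+
    with \<open>S \<noteq> T\<close> show False by simp
  qed
  moreover have "finite S" if "S \<in> orbit ` A" for S
    using that orbit_sub \<open>finite A\<close> finite_subset by blast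
  ultimately have "sum w A = sum (sum w) (orbit ` A)"
    using sum.Union_disjoint[of "orbit ` A" w] cover by auto
  also have "p dvd \<dots>"
  proof (rule dvd_sum)
    fix S assume "S \<in> orbit ` A"
    then obtain x where "x \<in> A" "S = orbit x" by blast
    then show "p dvd sum w S"
      using sum_range_funpow[of p x A r w, OF \<open>prime p\<close> _ closed period free invariant]
      unfolding orbit_def by simp
  qed
  finally show ?thesis .
qed

lemma sum_list_rotate1: "sum_list (rotate1 xs) = sum_list (xs :: 'a :: comm_monoid_add list)"
  by (cases xs) (simp_all add: add.commute)

lemma prod_list_rotate1: "prod_list (rotate1 xs) = prod_list (xs :: 'a :: comm_monoid_mult list)"
  by (cases xs) (simp_all add: mult.commute)

lemma rotate1_fixpoint_replicate: "rotate1 xs = xs \<Longrightarrow> xs = replicate (length xs) (hd xs)"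
proof (cases xs)
  case (Cons a ys)
  assume "rotate1 xs = xs"
  then have "card (set xs) = 1"
    using rotate1_fixpoint_card Cons by blast
  then have "set xs = {a}"
    using Cons by (metis card_1_singletonE list.set_intros(1) singletonD)
  then have "replicate (length xs) a = xs"
    by (intro replicate_length_same) simp
  then show ?thesis
    using Cons by simp
qed simp

lemma sum_list_replicate_nth: "sum_list (replicate m v) $ j = m * v $ j" for v :: "nat ^ 'n"
  by (induction m) auto

lemma prime_dvd_gbinom:
  fixes h :: "nat ^ 'n \<Rightarrow> nat"
  assumes "prime p" "\<not> (\<forall>j. p dvd y $ j)"
  shows "p dvd gbinom h p y"
  unfolding gbinom_def
proof (rule prime_dvd_sum_free_action[where r = rotate1])
  let ?A = "{ms. length ms = p \<and> sum_list ms = y}"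
  show "prime p" "finite ?A"
    by (fact assms(1), fact finite_vec_compositions)
  show "rotate1 ms \<in> ?A" "prod_list (map h (rotate1 ms)) = prod_list (map h ms)" if "ms \<in> ?A" for ms
    using that by (simp_all add: sum_list_rotate1 prod_list_rotate1 flip: rotate1_map)
  show "(rotate1 ^^ p) ms = ms" if "ms \<in> ?A" for ms
    using that by (simp flip: rotate_def)
  show "rotate1 ms \<noteq> ms" if ms: "ms \<in> ?A" for ms
  proof
    assume "rotate1 ms = ms"
    then obtain v where "ms = replicate p v"
      using ms rotate1_fixpoint_replicate by blast
    then have "y $ j = p * v $ j" for j
      using ms by (auto simp del: sum_list_replicate simp add: sum_list_replicate_nth)
    then show False
      using assms(2) by simp
  qed
qed

lemma gbinom_add_first_order_cong:
  fixes a b :: "nat ^ 'n \<Rightarrow> nat"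
  assumes b_dvd: "\<And>y. d dvd b y"
  shows "[gbinom (\<lambda>y. a y + b y) k x = gbinom a k x + k * vconv b (gbinom a (k - 1)) x] (mod d\<^sup>2)"
proof (induction k arbitrary: x)
  case 0
  show ?case by (simp add: gbinom_0)
next
  case (Suc k)
  define B where "B = vconv b (gbinom a (k - 1))"
  have B_dvd: "d dvd B z" for z
    unfolding B_def using b_dvd by (rule dvd_vconv_left)
  have "gbinom (\<lambda>y. a y + b y) (Suc k) x = vconv (\<lambda>y. a y + b y) (gbinom (\<lambda>y. a y + b y) k) x"
    by (simp add: gbinom_Suc)
  also have "[\<dots> = vconv (\<lambda>y. a y + b y) (\<lambda>z. gbinom a k z + k * B z) x] (mod d\<^sup>2)"
    unfolding vconv_def[of "\<lambda>y. a y + b y"]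
    by (intro cong_sum cong_mult cong_refl) (unfold B_def, rule Suc.IH)
  also have "vconv (\<lambda>y. a y + b y) (\<lambda>z. gbinom a k z + k * B z) x
      = vconv a (gbinom a k) x + vconv b (gbinom a k) x + k * vconv a B x + k * vconv b B x"
    by (simp add: vconv_def algebra_simps sum.distrib sum_distrib_left)
  also have "[\<dots> = vconv a (gbinom a k) x + vconv b (gbinom a k) x + k * vconv a B x] (mod d\<^sup>2)"
  proof -
    have "d\<^sup>2 dvd vconv b B x"
      unfolding vconv_def power2_eq_square by (intro dvd_sum mult_dvd_mono b_dvd B_dvd)
    then have "[k * vconv b B x = 0] (mod d\<^sup>2)"
      by (simp add: cong_0_iff)
    then show ?thesis
      by (metis add.right_neutral cong_add cong_refl)
  qed
  also have "k * vconv a B x = k * vconv b (gbinom a k) x"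
    by (cases k) (simp_all add: B_def gbinom_Suc vconv_left_commute[of a b])
  finally show ?case
    by (simp add: gbinom_Suc algebra_simps)
qed

lemma gbinom_eq_0_nonmultiple:
  fixes u :: "nat ^ 'n \<Rightarrow> nat"
  assumes supp: "\<And>y. u y \<noteq> 0 \<Longrightarrow> \<forall>j. p dvd y $ j"
    and "\<not> (\<forall>j. p dvd x $ j)"
  shows "gbinom u k x = 0"
  using assms(2)
proof (induction k arbitrary: x)
  case 0
  then have "x \<noteq> 0" by auto
  then show ?case by (simp add: gbinom_0)
next
  case (Suc k)
  have "u y * gbinom u k (x - y) = 0" if "y \<le> x" for y
  proof (cases "u y = 0")
    case False
    then have "\<forall>j. p dvd y $ j" by (rule supp)
    moreover have "y $ j + (x - y) $ j = x $ j" for j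
      using \<open>y \<le> x\<close> by (simp add: less_eq_vec_def)
    ultimately have "\<not> (\<forall>j. p dvd (x - y) $ j)"
      using Suc.prems by (metis dvd_add)
    then show ?thesis by (simp add: Suc.IH)
  qed simp
  then show ?case by (auto simp: gbinom_Suc vconv_def intro!: sum.neutral)
qed

lemma vscale_nth [simp]: "vscale c x $ j = c * x $ j"
  by (simp add: vscale_def)

lemma vscale_inject: "0 < p \<Longrightarrow> vscale p x = vscale p y \<longleftrightarrow> x = y"
  by (auto simp: vec_eq_iff)

lemma vscale_div: "\<forall>j. p dvd y $ j \<Longrightarrow> y = vscale p (\<chi> j. y $ j div p)"
  by (simp add: vec_eq_iff)

lemma the_vscale_eq: "0 < p \<Longrightarrow> v = vscale p x \<Longrightarrow> (THE x. v = vscale p x) = x"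
  by (auto simp: vscale_inject)

lemma gbinom_vscale:
  fixes a :: "nat ^ 'n \<Rightarrow> nat"
  assumes "0 < p" and supp: "\<And>y. a y \<noteq> 0 \<Longrightarrow> \<forall>j. p dvd y $ j"
  shows "gbinom a m (vscale p z) = gbinom (\<lambda>x. a (vscale p x)) m z"
proof (induction m arbitrary: z)
  case 0
  have "vscale p z = 0 \<longleftrightarrow> z = 0"
    using \<open>0 < p\<close> by (auto simp: vec_eq_iff)
  then show ?case by (simp add: gbinom_0)
next
  case (Suc m)
  have "vscale p ` {..z} \<subseteq> {..vscale p z}"
    by (auto simp: less_eq_vec_def)
  moreover have "a y = 0" if y: "y \<le> vscale p z" "y \<notin> vscale p ` {..z}" for y
  proof (rule ccontr)
    assume "a y \<noteq> 0"
    then have y_eq: "y = vscale p (\<chi> j. y $ j div p)"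
      using supp vscale_div by blast
    have "y $ j div p \<le> z $ j" for j
    proof -
      have "y $ j div p \<le> p * z $ j div p"
        using y(1) by (intro div_le_mono) (simp add: less_eq_vec_def)
      then show ?thesis
        using \<open>0 < p\<close> by simp
    qed
    then have "(\<chi> j. y $ j div p) \<in> {..z}"
      by (simp add: less_eq_vec_def)
    with y_eq y(2) show False
      by blast
  qed
  ultimately have "gbinom a (Suc m) (vscale p z)
      = (\<Sum>y\<in>vscale p ` {..z}. a y * gbinom a m (vscale p z - y))"
    unfolding gbinom_Suc vconv_def
    by (intro sum.mono_neutral_right) (auto simp: finite_atMost_vec_nat)
  also have "\<dots> = (\<Sum>w\<le>z. a (vscale p w) * gbinom a m (vscale p (z - w)))"
  proof (subst sum.reindex)
    show "inj_on (vscale p) {..z}"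
      using \<open>0 < p\<close> by (auto intro: inj_onI simp: vscale_inject)
    have "vscale p z - vscale p w = vscale p (z - w)" for w
      by (simp add: vec_eq_iff diff_mult_distrib2)
    then show "sum ((\<lambda>y. a y * gbinom a m (vscale p z - y)) \<circ> vscale p) {..z}
        = (\<Sum>w\<le>z. a (vscale p w) * gbinom a m (vscale p (z - w)))"
      by simp
  qed
  also have "\<dots> = gbinom (\<lambda>x. a (vscale p x)) (Suc m) z"
    by (simp add: Suc.IH gbinom_Suc vconv_def)
  finally show ?case .
qed

lemma vconv_split_nonmultiple:
  fixes h :: "nat ^ 'n \<Rightarrow> nat"
  assumes "0 < p"
  shows "vconv (\<lambda>y. if \<forall>j. p dvd y $ j then 0 else h y)
           (gbinom (\<lambda>y. if \<forall>j. p dvd y $ j then h y else 0) m) l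
    = (\<Sum>k \<in> {k \<in> Sset l. \<not> (\<forall>j. p dvd k $ j) \<and> (\<exists>x. l - k = vscale p x)}.
         h k * gbinom (\<lambda>x. h (vscale p x)) m (THE x. l - k = vscale p x))"
    (is "vconv ?b (gbinom ?a m) l = sum ?F ?K")
proof -
  have a_power_vanish: "gbinom ?a m (l - k) = 0" if "\<not> (\<exists>x. l - k = vscale p x)" for k
  proof (rule gbinom_eq_0_nonmultiple[of _ p])
    show "\<not> (\<forall>j. p dvd (l - k) $ j)"
      using that vscale_div by blast
  qed (simp split: if_splits)
  have "?b k * gbinom ?a m (l - k) = 0" if "k \<in> {..l} - ?K" for k
  proof (cases "\<forall>j. p dvd k $ j")
    case False
    with that have "\<not> (\<exists>x. l - k = vscale p x)"
      by (auto simp: Sset_def less_eq_vec_def)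
    then show ?thesis by (simp add: a_power_vanish)
  qed simp
  moreover have "?K \<subseteq> {..l}"
    by (auto simp: Sset_def less_eq_vec_def)
  ultimately have "vconv ?b (gbinom ?a m) l = (\<Sum>k\<in>?K. ?b k * gbinom ?a m (l - k))"
    unfolding vconv_def by (intro sum.mono_neutral_right finite_atMost_vec_nat) blast+
  also have "\<dots> = sum ?F ?K"
  proof (rule sum.cong[OF refl])
    fix k assume "k \<in> ?K"
    then obtain x where x: "l - k = vscale p x" and "\<not> (\<forall>j. p dvd k $ j)"
      by blast
    moreover have "gbinom ?a m (vscale p x) = gbinom (\<lambda>x. ?a (vscale p x)) m x"
      by (rule gbinom_vscale[OF \<open>0 < p\<close>]) (simp split: if_splits)
    ultimately show "?b k * gbinom ?a m (l - k) = ?F k"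
      using the_vscale_eq[OF \<open>0 < p\<close> x] by auto
  qed
  finally show ?thesis .
qed

theorem theorem10:
  fixes f :: "nat ^ 'n \<Rightarrow> nat" and p n :: nat and l :: "nat ^ 'n"
  assumes "prime p"
    and "\<forall>m. l \<noteq> vscale p m"
  shows "[gbinom f (n * p) l =
          n * (\<Sum>k \<in> {k \<in> Sset l. \<not> (\<forall>j. p dvd k $ j) \<and> (\<exists>x. l - k = vscale p x)}.
                 gbinom f p k * gbinom (\<lambda>x. gbinom f p (vscale p x)) (n - 1)
                    (THE x. l - k = vscale p x))] (mod p ^ 2)"
proof -
  define h where "h = gbinom f p"
  define a where "a y = (if \<forall>j. p dvd y $ j then h y else 0)" for y
  define b where "b y = (if \<forall>j. p dvd y $ j then 0 else h y)" for y
  have l_nonmultiple: "\<not> (\<forall>j. p dvd l $ j)"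
    using assms(2) vscale_div by blast
  have "(\<lambda>y. a y + b y) = h"
    by (simp add: a_def b_def fun_eq_iff)
  then have "gbinom f (n * p) l = gbinom (\<lambda>y. a y + b y) n l"
    by (simp add: gbinom_mult h_def)
  also have "[\<dots> = gbinom a n l + n * vconv b (gbinom a (n - 1)) l] (mod p\<^sup>2)"
    by (intro gbinom_add_first_order_cong)
       (auto simp: b_def h_def intro: prime_dvd_gbinom[OF \<open>prime p\<close>])
  also have "gbinom a n l = 0"
    using l_nonmultiple
    by (intro gbinom_eq_0_nonmultiple[of _ p]) (auto simp: a_def split: if_splits)
  also have "vconv b (gbinom a (n - 1)) l
      = (\<Sum>k \<in> {k \<in> Sset l. \<not> (\<forall>j. p dvd k $ j) \<and> (\<exists>x. l - k = vscale p x)}.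
           gbinom f p k * gbinom (\<lambda>x. gbinom f p (vscale p x)) (n - 1) (THE x. l - k = vscale p x))"
    unfolding a_def b_def h_def using prime_gt_0_nat[OF \<open>prime p\<close>]
    by (rule vconv_split_nonmultiple)
  finally show ?thesis by simp
qed

end
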